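(* Let $G$ be a group, $\nu$ a conjugation-invariant pseudo-norm on $G$, and $H,K$ subgroups of $G$ such that $(G,H)$ satisfies the property $\mathsf{FM}$. Then for any $g\in G$ and any $f\in K$, \[ \nu([g,f])\le 4E_{H,\nu}(K), \] where $[g,f]=gfg^{-1}f^{-1}$.
   Context: A conjugation-invariant pseudo-norm on a group $G$ is a function $\nu\colon G\to\mathbb{R}_{\ge0}$ with $\nu(1)=0$, $\nu(f)=\nu(f^{-1})$, $\nu(fg)\le\nu(f)+\nu(g)$ and $\nu(gfg^{-1})=\nu(f)$ for all $f,g\in G$. For a subgroup $H\le G$, $\nu_H(f)$ is the minimal $k$ such that $f=g_1h_1g_1^{-1}\cdots g_kh_kg_k^{-1}$ ($g_i\in G,h_i\in H$), $\infty$ if none. For $K\subset G$, $\mathrm{D}^f_H(K)$ is the set of $h_0\in G$ such that for all $g_1,\dots,g_k\in G$ there is $h\in G$ with every element of $hh_0h^{-1}K(hh_0h^{-1})^{-1}$ commuting with every element of $g_1Hg_1^{-1}\cup\dots\cup g_kHg_k^{-1}$; $E_{H,\nu}(K)=\inf_{h_0\in\mathrm{D}^f_H(K)}\nu(h_0)$ (infimum of the empty set being $+\infty$). $(G,H)$ satisfies $\mathsf{FM}$ if $\nu_H<\infty$ on $G$ and $\mathrm{D}^f_H(h_1Hh_1^{-1}\cup\dots\cup h_kHh_k^{-1})\ne\emptyset$ for all $h_1,\dots,h_k\in G$. *)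

theory Defs
  imports "HOL-Algebra.Group" "HOL-Library.Extended_Real"
begin

definition conj_inv_pseudo_norm :: "('a, 'b) monoid_scheme \<Rightarrow> ('a \<Rightarrow> real) \<Rightarrow> bool" where
  "conj_inv_pseudo_norm G \<nu> \<longleftrightarrow>
     (\<forall>f\<in>carrier G. \<nu> f \<ge> 0) \<and>
     \<nu> \<one>\<^bsub>G\<^esub> = 0 \<and>
     (\<forall>f\<in>carrier G. \<nu> f = \<nu> (inv\<^bsub>G\<^esub> f)) \<and>
     (\<forall>f\<in>carrier G. \<forall>g\<in>carrier G. \<nu> (f \<otimes>\<^bsub>G\<^esub> g) \<le> \<nu> f + \<nu> g) \<and>
     (\<forall>f\<in>carrier G. \<forall>g\<in>carrier G. \<nu> (g \<otimes>\<^bsub>G\<^esub> f \<otimes>\<^bsub>G\<^esub> inv\<^bsub>G\<^esub> g) = \<nu> f)"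

definition conj_set :: "('a, 'b) monoid_scheme \<Rightarrow> 'a \<Rightarrow> 'a set \<Rightarrow> 'a set" where
  "conj_set G g S = (\<lambda>s. g \<otimes>\<^bsub>G\<^esub> s \<otimes>\<^bsub>G\<^esub> inv\<^bsub>G\<^esub> g) ` S"

text \<open>\<nu>_H(f) < \<infinity>: f is a finite product g1 h1 g1^-1 ... gk hk gk^-1.\<close>
definition nuH_finite :: "('a, 'b) monoid_scheme \<Rightarrow> 'a set \<Rightarrow> 'a \<Rightarrow> bool" where
  "nuH_finite G H f \<longleftrightarrow>
     (\<exists>ps :: ('a \<times> 'a) list. (\<forall>(g, h)\<in>set ps. g \<in> carrier G \<and> h \<in> H) \<and>
        f = foldr (\<lambda>(g, h) x. (g \<otimes>\<^bsub>G\<^esub> h \<otimes>\<^bsub>G\<^esub> inv\<^bsub>G\<^esub> g) \<otimes>\<^bsub>G\<^esub> x) ps \<one>\<^bsub>G\<^esub>)"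

definition Df :: "('a, 'b) monoid_scheme \<Rightarrow> 'a set \<Rightarrow> 'a set \<Rightarrow> 'a set" where
  "Df G H K = {h0 \<in> carrier G. \<forall>gs. set gs \<subseteq> carrier G \<longrightarrow>
      (\<exists>h\<in>carrier G.
         \<forall>x\<in>conj_set G (h \<otimes>\<^bsub>G\<^esub> h0 \<otimes>\<^bsub>G\<^esub> inv\<^bsub>G\<^esub> h) K.
         \<forall>y\<in>(\<Union>g\<in>set gs. conj_set G g H). x \<otimes>\<^bsub>G\<^esub> y = y \<otimes>\<^bsub>G\<^esub> x)}"

text \<open>E_{H,\<nu>}(K), infimum of the empty set being +\<infinity>.\<close>
definition E_Hnu :: "('a, 'b) monoid_scheme \<Rightarrow> 'a set \<Rightarrow> ('a \<Rightarrow> real) \<Rightarrow> 'a set \<Rightarrow> ereal" where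
  "E_Hnu G H \<nu> K = (INF h0\<in>Df G H K. ereal (\<nu> h0))"

definition FM :: "('a, 'b) monoid_scheme \<Rightarrow> 'a set \<Rightarrow> bool" where
  "FM G H \<longleftrightarrow> (\<forall>f\<in>carrier G. nuH_finite G H f) \<and>
     (\<forall>hs. set hs \<subseteq> carrier G \<longrightarrow> Df G H (\<Union>h\<in>set hs. conj_set G h H) \<noteq> {})"

definition commutator :: "('a, 'b) monoid_scheme \<Rightarrow> 'a \<Rightarrow> 'a \<Rightarrow> 'a" where
  "commutator G g f = g \<otimes>\<^bsub>G\<^esub> f \<otimes>\<^bsub>G\<^esub> inv\<^bsub>G\<^esub> g \<otimes>\<^bsub>G\<^esub> inv\<^bsub>G\<^esub> f"

end

theory Submission
  imports Defs
begin

text \<open>By FM, \<open>g\<close> is a finite product of conjugates of elements of \<open>H\<close>; an element \<open>h\<^sub>0\<close> of \<open>D\<^sup>f\<^sub>H(K)\<close> can be conjugated to some \<open>k\<close> with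
  \<open>\<nu> k = \<nu> h\<^sub>0\<close> such that \<open>k f k\<inverse>\<close> commutes with all these conjugates, hence with \<open>g\<close>.
  Then \<open>[g, f] = [g, c\<inverse>]\<close> for \<open>c = [k, f]\<close>, and a commutator has norm at most twice the norm
  of either entry, so \<open>\<nu> [g, f] \<le> 2 \<nu> c \<le> 4 \<nu> k\<close>.\<close>

lemma (in group) inv_mult_cancel_left [simp]:
  "a \<in> carrier G \<Longrightarrow> b \<in> carrier G \<Longrightarrow> inv a \<otimes> (a \<otimes> b) = b"
  by (simp flip: m_assoc)

lemma (in group) mult_inv_cancel_left [simp]:
  "a \<in> carrier G \<Longrightarrow> b \<in> carrier G \<Longrightarrow> a \<otimes> (inv a \<otimes> b) = b"
  by (simp flip: m_assoc)

lemma (in group) commutator_closed [simp]: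
  "g \<in> carrier G \<Longrightarrow> f \<in> carrier G \<Longrightarrow> commutator G g f \<in> carrier G"
  unfolding commutator_def by simp

lemma (in group) commutator_eq_commutator_inv_commutator:
  assumes g: "g \<in> carrier G" and f: "f \<in> carrier G" and k: "k \<in> carrier G"
    and comm: "(k \<otimes> f \<otimes> inv k) \<otimes> g = g \<otimes> (k \<otimes> f \<otimes> inv k)"
  shows "commutator G g f = commutator G g (inv (commutator G k f))"
proof -
  define c where "c = commutator G k f"
  have c: "c \<in> carrier G" unfolding c_def commutator_def using f k by simp
  have "k \<otimes> f \<otimes> inv k = c \<otimes> f"
    unfolding c_def commutator_def using f k by (simp add: m_assoc)
  with comm have cf: "c \<otimes> (f \<otimes> g) = g \<otimes> (c \<otimes> f)"
    using c f g by (simp add: m_assoc)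
  have "commutator G g f \<otimes> (f \<otimes> g) = g \<otimes> f"
    unfolding commutator_def using f g by (simp add: m_assoc)
  also have "\<dots> = (g \<otimes> inv c \<otimes> inv g) \<otimes> (g \<otimes> (c \<otimes> f))"
    using c f g by (simp add: m_assoc)
  also have "\<dots> = commutator G g (inv c) \<otimes> (f \<otimes> g)"
    unfolding commutator_def using c f g cf by (simp add: m_assoc)
  finally show ?thesis
    using right_cancel[of "f \<otimes> g"] c f g unfolding c_def commutator_def by simp
qed

lemma (in group) commutes_foldr_mult:
  assumes "x \<in> carrier G" "set ys \<subseteq> carrier G" "\<forall>y\<in>set ys. x \<otimes> y = y \<otimes> x"
  shows "x \<otimes> foldr (\<otimes>) ys \<one> = foldr (\<otimes>) ys \<one> \<otimes> x"
  using assms(2,3)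
proof (induction ys)
  case Nil
  then show ?case using assms(1) by simp
next
  case (Cons y ys)
  have ys: "foldr (\<otimes>) ys \<one> \<in> carrier G"
    using Cons.prems(1) by (induction ys) auto
  have "x \<otimes> (y \<otimes> foldr (\<otimes>) ys \<one>) = y \<otimes> (x \<otimes> foldr (\<otimes>) ys \<one>)"
    using Cons.prems assms(1) ys by (simp flip: m_assoc)
  also have "\<dots> = (y \<otimes> foldr (\<otimes>) ys \<one>) \<otimes> x"
    using Cons assms(1) ys by (simp add: m_assoc)
  finally show ?case by simp
qed

lemma (in group) nuH_finite_commutes:
  assumes H: "H \<subseteq> carrier G" and g: "nuH_finite G H g"
  obtains gs where "set gs \<subseteq> carrier G"
    and "\<And>x. x \<in> carrier G \<Longrightarrow> \<forall>y\<in>(\<Union>a\<in>set gs. conj_set G a H). x \<otimes> y = y \<otimes> x \<Longrightarrow>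
           x \<otimes> g = g \<otimes> x"
proof -
  obtain ps where ps: "\<forall>(a, b)\<in>set ps. a \<in> carrier G \<and> b \<in> H"
    and g_eq: "g = foldr (\<lambda>(a, b) x. (a \<otimes> b \<otimes> inv a) \<otimes> x) ps \<one>"
    using g unfolding nuH_finite_def by blast
  define ys where "ys = map (\<lambda>(a, b). a \<otimes> b \<otimes> inv a) ps"
  have g_ys: "g = foldr (\<otimes>) ys \<one>"
    unfolding g_eq ys_def foldr_map by (simp add: comp_def case_prod_unfold)
  have ys_conj: "set ys \<subseteq> (\<Union>a\<in>set (map fst ps). conj_set G a H)"
    using ps unfolding ys_def conj_set_def by force
  have "(\<Union>a\<in>set (map fst ps). conj_set G a H) \<subseteq> carrier G"
    using ps H unfolding conj_set_def by fastforce
  with ys_conj have ys: "set ys \<subseteq> carrier G" by blast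
  show thesis
  proof (rule that[of "map fst ps"])
    show "set (map fst ps) \<subseteq> carrier G" using ps by auto
  next
    fix x assume "x \<in> carrier G"
      and "\<forall>y\<in>(\<Union>a\<in>set (map fst ps). conj_set G a H). x \<otimes> y = y \<otimes> x"
    with ys_conj ys show "x \<otimes> g = g \<otimes> x"
      unfolding g_ys by (intro commutes_foldr_mult) auto
  qed
qed

lemma (in group) Df_commutes_nuH_finite:
  assumes H: "H \<subseteq> carrier G" and K: "K \<subseteq> carrier G"
    and h0: "h0 \<in> Df G H K" and g: "nuH_finite G H g"
  obtains h where "h \<in> carrier G"
    and "\<forall>x\<in>conj_set G (h \<otimes> h0 \<otimes> inv h) K. x \<otimes> g = g \<otimes> x"
proof -
  obtain gs where gs: "set gs \<subseteq> carrier G"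
    and commutes: "\<And>x. x \<in> carrier G \<Longrightarrow> \<forall>y\<in>(\<Union>a\<in>set gs. conj_set G a H). x \<otimes> y = y \<otimes> x \<Longrightarrow>
           x \<otimes> g = g \<otimes> x"
    using nuH_finite_commutes[OF H g] by blast
  obtain h where h: "h \<in> carrier G"
    and h_comm: "\<forall>x\<in>conj_set G (h \<otimes> h0 \<otimes> inv h) K.
                   \<forall>y\<in>(\<Union>a\<in>set gs. conj_set G a H). x \<otimes> y = y \<otimes> x"
    using h0 gs unfolding Df_def by blast
  have "h0 \<in> carrier G" using h0 unfolding Df_def by blast
  with h K have "conj_set G (h \<otimes> h0 \<otimes> inv h) K \<subseteq> carrier G"
    unfolding conj_set_def by fastforce
  with h_comm show thesis
    using that[OF h] commutes by blast
qed

locale conj_inv_pseudo_normed_group = group G for G (structure) +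
  fixes \<nu> :: "'a \<Rightarrow> real"
  assumes pseudo_norm: "conj_inv_pseudo_norm G \<nu>"
begin

lemma norm_inv: "f \<in> carrier G \<Longrightarrow> \<nu> (inv f) = \<nu> f"
  using pseudo_norm unfolding conj_inv_pseudo_norm_def by metis

lemma norm_mult_le: "f \<in> carrier G \<Longrightarrow> g \<in> carrier G \<Longrightarrow> \<nu> (f \<otimes> g) \<le> \<nu> f + \<nu> g"
  using pseudo_norm unfolding conj_inv_pseudo_norm_def by metis

lemma norm_conj: "f \<in> carrier G \<Longrightarrow> g \<in> carrier G \<Longrightarrow> \<nu> (g \<otimes> f \<otimes> inv g) = \<nu> f"
  using pseudo_norm unfolding conj_inv_pseudo_norm_def by metis

lemma norm_commutator_le_left:
  assumes "g \<in> carrier G" "f \<in> carrier G"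
  shows "\<nu> (commutator G g f) \<le> 2 * \<nu> g"
proof -
  have "\<nu> (commutator G g f) = \<nu> (g \<otimes> (f \<otimes> inv g \<otimes> inv f))"
    unfolding commutator_def using assms by (simp add: m_assoc)
  also have "\<dots> \<le> \<nu> g + \<nu> (f \<otimes> inv g \<otimes> inv f)"
    using assms by (simp add: norm_mult_le)
  also have "\<nu> (f \<otimes> inv g \<otimes> inv f) = \<nu> g"
    using assms by (simp add: norm_conj norm_inv)
  finally show ?thesis by simp
qed

lemma norm_commutator_le_right:
  assumes "g \<in> carrier G" "f \<in> carrier G"
  shows "\<nu> (commutator G g f) \<le> 2 * \<nu> f"
proof -
  have "\<nu> (commutator G g f) \<le> \<nu> (g \<otimes> f \<otimes> inv g) + \<nu> (inv f)"
    unfolding commutator_def using assms by (simp add: norm_mult_le)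
  then show ?thesis
    using assms by (simp add: norm_conj norm_inv)
qed

lemma norm_commutator_le_Df:
  assumes H: "subgroup H G" and K: "subgroup K G" and FM: "FM G H"
    and g: "g \<in> carrier G" and f: "f \<in> K" and h0: "h0 \<in> Df G H K"
  shows "\<nu> (commutator G g f) \<le> 4 * \<nu> h0"
proof -
  have "nuH_finite G H g" using FM g unfolding FM_def by blast
  then obtain h where h: "h \<in> carrier G"
    and comm: "\<forall>x\<in>conj_set G (h \<otimes> h0 \<otimes> inv h) K. x \<otimes> g = g \<otimes> x"
    using Df_commutes_nuH_finite[OF subgroup.subset[OF H] subgroup.subset[OF K] h0] by blast
  define k where "k = h \<otimes> h0 \<otimes> inv h"
  have h0_carrier: "h0 \<in> carrier G" using h0 unfolding Df_def by blast
  have k: "k \<in> carrier G" unfolding k_def using h h0_carrier by simp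
  have f_carrier: "f \<in> carrier G" using subgroup.mem_carrier[OF K f] .
  have "(k \<otimes> f \<otimes> inv k) \<otimes> g = g \<otimes> (k \<otimes> f \<otimes> inv k)"
    using comm f unfolding k_def conj_set_def by blast
  then have "\<nu> (commutator G g f) = \<nu> (commutator G g (inv (commutator G k f)))"
    using commutator_eq_commutator_inv_commutator[OF g f_carrier k] by simp
  also have "\<dots> \<le> 2 * \<nu> (commutator G k f)"
    using norm_commutator_le_right[OF g, of "inv (commutator G k f)"] k f_carrier
    by (simp add: norm_inv)
  also have "\<dots> \<le> 4 * \<nu> k"
    using norm_commutator_le_left[OF k f_carrier] by simp
  also have "\<nu> k = \<nu> h0"
    unfolding k_def using h h0_carrier by (simp add: norm_conj)
  finally show ?thesis .
qed

end

theorem lemma2p6: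
  fixes G (structure) and \<nu> :: "'a \<Rightarrow> real" and H K :: "'a set"
  assumes "group G"
    and "conj_inv_pseudo_norm G \<nu>"
    and "subgroup H G" and "subgroup K G"
    and "FM G H"
    and "g \<in> carrier G" and "f \<in> K"
  shows "ereal (\<nu> (commutator G g f)) \<le> 4 * E_Hnu G H \<nu> K"
proof -
  interpret conj_inv_pseudo_normed_group G \<nu>
    using assms(1,2) by (simp add: conj_inv_pseudo_normed_group_def conj_inv_pseudo_normed_group_axioms_def)
  have "ereal (\<nu> (commutator G g f) / 4) \<le> E_Hnu G H \<nu> K"
    unfolding E_Hnu_def
    using norm_commutator_le_Df[OF assms(3-7)] by (intro INF_greatest) (simp add: mult.commute)
  then have "4 * ereal (\<nu> (commutator G g f) / 4) \<le> 4 * E_Hnu G H \<nu> K"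
    by (rule ereal_mult_left_mono) simp
  then show ?thesis by simp
qed

end
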